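(* Let $R$ be a ring. Let $P$ be a polygon divided into subpolygons $P^1$ and $P^2$ by the dissection $\{(t,v),(v,t)\}$; let $V^\alpha$ be the vertex set of $P^\alpha$ and $U^\alpha=V^\alpha\setminus\{t,v\}$. Let $D^2$ be a dissection of $P^2$ and $D=\{(t,v),(v,t)\}\,\dot\cup\,D^2$. Let $c:\operatorname{diag}P\to R$ be a map with $c_{rs}\in R^*$ for all $(r,s)\in D$. Assume that $c|_{\operatorname{diag}P^2}$ satisfies the $T$-path formula with respect to $D^2$ (i.e. $c_{ik}=\sum_{p\in\mathscr{P}(D^2,i,k)}c_p$ for all distinct vertices $i,k$ of $P^2$, with $T$-paths taken in $P^2$), and that $c$ is a weak frieze with respect to $\{(t,v),(v,t)\}$. Then for all $i\in U^1$ and $k\in U^2$, \[ c_{ik}=\sum_{p\in\mathscr{P}(D,i,k)}c_p. \]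
   Context: $R^*$ denotes the invertible elements of $R$. A polygon is a finite set of at least three vertices with a cyclic ordering, thought of as a convex polygon in the plane; a subpolygon is a subset of at least three vertices with induced cyclic ordering. $\operatorname{diag}P$ is the set of ordered pairs of distinct vertices; internal diagonals are those whose endpoints are not neighbours. $(i,k)$ and $(j,\ell)$ cross if $i,j,k,\ell$ are pairwise distinct with $i<j<k<\ell$ or $i<\ell<k<j$ cyclically. A dissection is a set of internal diagonals closed under reversal with no two crossing; the pair $\{(t,v),(v,t)\}$ divides $P$ into the subpolygons $P^1,P^2$ whose vertex sets are the vertices on either side of $(t,v)$ together with $t,v$. Write $c_{ik}=c(i,k)$, $c_{xx}=0$. A map $c$ is a weak frieze with respect to a dissection $E$ if $c_{rs}\in R^*$ for $(r,s)\in E$ and whenever $(i,k)$ crosses $(r,s)$ with $(r,s),(s,r)\in E$, $c_{ik}=c_{ir}c_{sr}^{-1}c_{sk}+c_{is}c_{rs}^{-1}c_{rk}$. For a polygon $Q$ with dissection $D$, a sequence $(p_1,\ldots,p_\pi)$ of vertices of $Q$ is a $T$-path from $p_1$ to $p_\pi$ with respect to $D$ if: $p_1\ne p_\pi$; the sets $\{p_\alpha,p_{\alpha+1}\}$ are pairwise different 2-element sets; no $(p_\alpha,p_{\alpha+1})$ crosses a diagonal of $D$; each $(p_{2\alpha},p_{2\alpha+1})$ is in $D$ and crosses $(p_1,p_\pi)$, with crossing points progressing monotonically from $p_1$ to $p_\pi$. $\mathscr{P}(D,i,k)$ is the set of such $T$-paths from $i$ to $k$, and $c_p=c_{p_1p_2}c_{p_3p_2}^{-1}c_{p_3p_4}\cdots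 c_{p_{\pi-1}p_{\pi-2}}^{-1}c_{p_{\pi-1}p_\pi}$. *)

theory Defs
  imports Main
begin

text \<open>Polygon P is modelled with vertex set {0..<n}, n \<ge> 3, ordered cyclically by
  the natural order. Subpolygons are subsets S of {0..<n} with the induced cyclic order.\<close>

definition is_unit :: "'a::ring_1 \<Rightarrow> bool" where
  "is_unit x \<longleftrightarrow> (\<exists>y. x * y = 1 \<and> y * x = 1)"

definition rinv :: "'a::ring_1 \<Rightarrow> 'a" where
  "rinv x = (THE y. x * y = 1 \<and> y * x = 1)"

definition cbtw :: "nat \<Rightarrow> nat \<Rightarrow> nat \<Rightarrow> bool" where
  "cbtw a b c \<longleftrightarrow> (a < b \<and> b < c) \<or> (b < c \<and> c < a) \<or> (c < a \<and> a < b)"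

definition crosses :: "nat \<times> nat \<Rightarrow> nat \<times> nat \<Rightarrow> bool" where
  "crosses d e \<longleftrightarrow> (case d of (i,k) \<Rightarrow> case e of (j,l) \<Rightarrow>
     distinct [i,j,k,l] \<and> ((cbtw i j k \<and> cbtw k l i) \<or> (cbtw i l k \<and> cbtw k j i)))"

definition nbrs :: "nat set \<Rightarrow> nat \<Rightarrow> nat \<Rightarrow> bool" where
  "nbrs S x y \<longleftrightarrow> x \<in> S \<and> y \<in> S \<and> x \<noteq> y \<and>
     ((\<forall>w\<in>S. \<not> cbtw x w y) \<or> (\<forall>w\<in>S. \<not> cbtw y w x))"

definition internal_diag :: "nat set \<Rightarrow> nat \<times> nat \<Rightarrow> bool" where
  "internal_diag S d \<longleftrightarrow> fst d \<in> S \<and> snd d \<in> S \<and> fst d \<noteq> snd d \<and> \<not> nbrs S (fst d) (snd d)"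

definition dissection :: "nat set \<Rightarrow> (nat \<times> nat) set \<Rightarrow> bool" where
  "dissection S E \<longleftrightarrow> (\<forall>d\<in>E. internal_diag S d) \<and> (\<forall>(a,b)\<in>E. (b,a) \<in> E) \<and>
     (\<forall>d\<in>E. \<forall>e\<in>E. \<not> crosses d e)"

definition weak_frieze :: "nat \<Rightarrow> (nat \<times> nat) set \<Rightarrow> (nat \<Rightarrow> nat \<Rightarrow> 'a::ring_1) \<Rightarrow> bool" where
  "weak_frieze n E c \<longleftrightarrow> (\<forall>(r,s)\<in>E. is_unit (c r s)) \<and>
     (\<forall>i<n. \<forall>k<n. \<forall>r s. (r,s) \<in> E \<longrightarrow> (s,r) \<in> E \<longrightarrow> crosses (i,k) (r,s) \<longrightarrow>
        c i k = c i r * rinv (c s r) * c s k + c i s * rinv (c r s) * c r k)"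

definition up_end :: "nat \<Rightarrow> nat \<Rightarrow> nat \<times> nat \<Rightarrow> nat" where
  "up_end i k d = (if cbtw i (fst d) k then fst d else snd d)"
definition low_end :: "nat \<Rightarrow> nat \<Rightarrow> nat \<times> nat \<Rightarrow> nat" where
  "low_end i k d = (if cbtw i (fst d) k then snd d else fst d)"

text \<open>For two distinct non-crossing diagonals d1, d2, both crossing (i,k) (convex position),
  the crossing point of d1 with (i,k) is strictly closer to i than that of d2 iff
  d2 lies on the k-side of d1.\<close>
definition closer :: "nat \<Rightarrow> nat \<Rightarrow> nat \<times> nat \<Rightarrow> nat \<times> nat \<Rightarrow> bool" where
  "closer i k d1 d2 \<longleftrightarrow>
     (let a1 = up_end i k d1; b1 = low_end i k d1; a2 = up_end i k d2; b2 = low_end i k d2 in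
      (a2 = a1 \<or> cbtw a1 a2 k) \<and> (b2 = b1 \<or> cbtw k b2 b1) \<and> (a1, b1) \<noteq> (a2, b2))"

text \<open>T-paths (as lists, 0-based indices) in the subpolygon S with respect to dissection D.
  Paper index 2\<alpha>, 2\<alpha>+1 corresponds to list positions j, j+1 with j odd.\<close>
definition is_tpath :: "nat set \<Rightarrow> (nat \<times> nat) set \<Rightarrow> nat list \<Rightarrow> bool" where
  "is_tpath S D p \<longleftrightarrow> length p \<ge> 2 \<and> set p \<subseteq> S \<and> hd p \<noteq> last p \<and>
     (\<forall>j. j + 1 < length p \<longrightarrow> p ! j \<noteq> p ! (j+1)) \<and>
     inj_on (\<lambda>j. {p ! j, p ! (j+1)}) {j. j + 1 < length p} \<and>
     (\<forall>j. j + 1 < length p \<longrightarrow> (\<forall>d\<in>D. \<not> crosses (p ! j, p ! (j+1)) d)) \<and>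
     (\<forall>j. j + 1 < length p \<longrightarrow> odd j \<longrightarrow>
        (p ! j, p ! (j+1)) \<in> D \<and> crosses (p ! j, p ! (j+1)) (hd p, last p)) \<and>
     (\<forall>j1 j2. j1 < j2 \<longrightarrow> j2 + 1 < length p \<longrightarrow> odd j1 \<longrightarrow> odd j2 \<longrightarrow>
        closer (hd p) (last p) (p ! j1, p ! (j1+1)) (p ! j2, p ! (j2+1)))"

definition tpaths :: "nat set \<Rightarrow> (nat \<times> nat) set \<Rightarrow> nat \<Rightarrow> nat \<Rightarrow> nat list set" where
  "tpaths S D i k = {p. is_tpath S D p \<and> hd p = i \<and> last p = k}"

fun tcoef :: "(nat \<Rightarrow> nat \<Rightarrow> 'a::ring_1) \<Rightarrow> nat list \<Rightarrow> 'a" where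
  "tcoef c (a # b # x # rest) = c a b * rinv (c x b) * tcoef c (x # rest)"
| "tcoef c [a, b] = c a b"
| "tcoef c _ = 0"

definition side :: "nat \<Rightarrow> nat \<Rightarrow> nat \<Rightarrow> nat set" where
  "side n t v = {t, v} \<union> {w. w < n \<and> cbtw t w v}"

end

theory Submission
  imports Defs
begin

text \<open>
  Since (i,k) crosses (t,v), which no step of a T-path may cross, a T-path from i in U^1 to k
  in U^2 first steps from i to an endpoint x of (t,v), and all its later vertices lie in P^2.
  Let y be the other endpoint. The T-paths from i through x correspond bijectively to the
  T-paths from y to k in P^2: a path q becomes i x q, unless q already starts with the step
  y x, in which case its first vertex y is replaced by i. The geometric input is that for
  diagonals of P^2 avoiding y, crossing (y,k) is the same as crossing (i,k), with the crossing
  points met in the same order.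
  Both cases multiply c_p by c_{ix} c_{yx}^{-1}, so the T-path sum for (i,k) is
  c_{it} c_{vt}^{-1} c_{vk} + c_{iv} c_{tv}^{-1} c_{tk}, which is c_{ik} by the exchange relation
  of the weak frieze for the crossing diagonals (i,k) and (t,v).
\<close>

lemma rinv_left_inverse:
  assumes "is_unit (a :: 'a :: ring_1)"
  shows "rinv a * a = 1"
proof -
  obtain b where b: "a * b = 1" "b * a = 1"
    using assms unfolding is_unit_def by blast
  have "rinv a = b"
    unfolding rinv_def
  proof (rule the_equality)
    fix b' assume "a * b' = 1 \<and> b' * a = 1"
    then have "b' = b' * (a * b)" and "b' * a = 1"
      using b by simp_all
    then show "b' = b"
      by (simp add: mult.assoc [symmetric])
  qed (use b in simp)
  then show ?thesis
    using b by simp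
qed

lemma weak_frieze_exchange:
  assumes "weak_frieze n E c" and "i < n" "k < n" "(r, s) \<in> E" "(s, r) \<in> E" "crosses (i, k) (r, s)"
  shows "c i k = c i r * rinv (c s r) * c s k + c i s * rinv (c r s) * c r k"
  using assms unfolding weak_frieze_def by blast

section \<open>T-paths as lists of steps\<close>

fun path_edges :: "'a list \<Rightarrow> ('a \<times> 'a) list" where
  "path_edges (a # b # l) = (a, b) # path_edges (b # l)"
| "path_edges _ = []"

text \<open>The steps (p_1, p_2), (p_3, p_4), ... of a path p_0 p_1 p_2 ...: those that a T-path takes
  along diagonals of the dissection (the paper's 1-based (p_{2\<alpha>}, p_{2\<alpha>+1})).\<close>
fun odd_edges :: "'a list \<Rightarrow> ('a \<times> 'a) list" where
  "odd_edges (a # b # c # l) = (b, c) # odd_edges (c # l)"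
| "odd_edges _ = []"

lemma length_path_edges [simp]: "length (path_edges p) = length p - 1"
  by (induction p rule: path_edges.induct) auto

lemma nth_path_edges: "j + 1 < length p \<Longrightarrow> path_edges p ! j = (p ! j, p ! (j + 1))"
  by (induction p arbitrary: j rule: path_edges.induct) (auto simp: nth_Cons split: nat.split)

lemma path_edges_conv_map: "path_edges p = map (\<lambda>j. (p ! j, p ! (j + 1))) [0..<length p - 1]"
  by (rule nth_equalityI) (auto simp: nth_path_edges)

lemma length_odd_edges [simp]: "length (odd_edges p) = (length p - 1) div 2"
  by (induction p rule: odd_edges.induct) auto

lemma nth_odd_edges:
  "m < length (odd_edges p) \<Longrightarrow> odd_edges p ! m = (p ! (2 * m + 1), p ! (2 * m + 2))"
  by (induction p arbitrary: m rule: odd_edges.induct) (auto simp: nth_Cons split: nat.split)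

lemma odd_edges_conv_map:
  "odd_edges p = map (\<lambda>m. (p ! (2 * m + 1), p ! (2 * m + 2))) [0..<(length p - 1) div 2]"
  by (rule nth_equalityI) (auto simp: nth_odd_edges)

lemma odd_edges_Cons_eq: "odd_edges (a # l) = odd_edges (b # l)"
  by (cases l rule: odd_edges.cases) auto

lemma all_odd_positions_iff:
  "(\<forall>j. j + 1 < length p \<longrightarrow> odd j \<longrightarrow> Q j) \<longleftrightarrow> (\<forall>m < length (odd_edges p). Q (2 * m + 1))"
proof -
  have "j + 1 < length p \<and> odd j \<longleftrightarrow> (\<exists>m < length (odd_edges p). j = 2 * m + 1)" for j
    by (auto elim!: oddE)
  then show ?thesis by metis
qed

lemma is_tpath_iff:
  "is_tpath S D p \<longleftrightarrow> 2 \<le> length p \<and> set p \<subseteq> S \<and> hd p \<noteq> last p \<and>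
     (\<forall>(a, b) \<in> set (path_edges p). a \<noteq> b \<and> (\<forall>d\<in>D. \<not> crosses (a, b) d)) \<and>
     distinct (map (\<lambda>(a, b). {a, b}) (path_edges p)) \<and>
     (\<forall>e \<in> set (odd_edges p). e \<in> D \<and> crosses e (hd p, last p)) \<and>
     sorted_wrt (closer (hd p) (last p)) (odd_edges p)"
proof -
  have edges: "(\<forall>(a, b) \<in> set (path_edges p). Q a b) \<longleftrightarrow> (\<forall>j. j + 1 < length p \<longrightarrow> Q (p ! j) (p ! (j + 1)))"
    for Q
    by (auto simp: path_edges_conv_map)
  have inj: "inj_on (\<lambda>j. {p ! j, p ! (j + 1)}) {j. j + 1 < length p} \<longleftrightarrow>
      distinct (map (\<lambda>(a, b). {a, b}) (path_edges p))"
  proof -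
    have "{j. j + 1 < length p} = {0..<length p - 1}" by auto
    then show ?thesis by (simp add: path_edges_conv_map distinct_map case_prod_beta comp_def)
  qed
  have odd: "(\<forall>j. j + 1 < length p \<longrightarrow> odd j \<longrightarrow> Q (p ! j, p ! (j + 1))) \<longleftrightarrow> (\<forall>e \<in> set (odd_edges p). Q e)"
    for Q unfolding all_odd_positions_iff by (auto simp: odd_edges_conv_map)
  have sorted: "(\<forall>j1 j2. j1 < j2 \<longrightarrow> j2 + 1 < length p \<longrightarrow> odd j1 \<longrightarrow> odd j2 \<longrightarrow>
        R (p ! j1, p ! (j1 + 1)) (p ! j2, p ! (j2 + 1))) \<longleftrightarrow> sorted_wrt R (odd_edges p)" for R
  proof -
    have "(\<forall>j1 j2. j1 < j2 \<longrightarrow> j2 + 1 < length p \<longrightarrow> odd j1 \<longrightarrow> odd j2 \<longrightarrow>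
        R (p ! j1, p ! (j1 + 1)) (p ! j2, p ! (j2 + 1))) \<longleftrightarrow>
      (\<forall>m2 < length (odd_edges p). \<forall>j1. j1 < 2 * m2 + 1 \<longrightarrow> odd j1 \<longrightarrow>
        R (p ! j1, p ! (j1 + 1)) (odd_edges p ! m2))"
      using all_odd_positions_iff[where Q = "\<lambda>j2. \<forall>j1. j1 < j2 \<longrightarrow> odd j1 \<longrightarrow>
        R (p ! j1, p ! (j1 + 1)) (p ! j2, p ! (j2 + 1))"]
      by (auto simp: nth_odd_edges)
    also have "\<dots> \<longleftrightarrow> (\<forall>m2 < length (odd_edges p). \<forall>m1 < m2. R (odd_edges p ! m1) (odd_edges p ! m2))"
      by (auto simp: nth_odd_edges elim!: oddE)
    finally show ?thesis by (auto simp: sorted_wrt_iff_nth_less)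
  qed
  show ?thesis
    unfolding is_tpath_def inj edges sorted odd[of "\<lambda>e. e \<in> D \<and> crosses e (hd p, last p)"] by blast
qed

lemma mem_tpaths_iff:
  "p \<in> tpaths S D a b \<longleftrightarrow> 2 \<le> length p \<and> hd p = a \<and> last p = b \<and> a \<noteq> b \<and> set p \<subseteq> S \<and>
     (\<forall>(c, d) \<in> set (path_edges p). c \<noteq> d \<and> (\<forall>e\<in>D. \<not> crosses (c, d) e)) \<and>
     distinct (map (\<lambda>(c, d). {c, d}) (path_edges p)) \<and>
     (\<forall>e \<in> set (odd_edges p). e \<in> D \<and> crosses e (a, b)) \<and>
     sorted_wrt (closer a b) (odd_edges p)"
  unfolding tpaths_def is_tpath_iff by auto

lemma mem_tpathsI:
  assumes "2 \<le> length p" "hd p = a" "last p = b" "a \<noteq> b" "set p \<subseteq> S"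
    and "\<forall>(c, d) \<in> set (path_edges p). c \<noteq> d \<and> (\<forall>e\<in>D. \<not> crosses (c, d) e)"
    and "distinct (map (\<lambda>(c, d). {c, d}) (path_edges p))"
    and "\<forall>e \<in> set (odd_edges p). e \<in> D \<and> crosses e (a, b)"
    and "sorted_wrt (closer a b) (odd_edges p)"
  shows "p \<in> tpaths S D a b"
  using assms by (simp add: mem_tpaths_iff)

lemma path_edges_subset: "set (path_edges p) \<subseteq> set p \<times> set p"
  by (induction p rule: path_edges.induct) auto

lemma doubleton_notin_path_edges: "a \<notin> set p \<Longrightarrow> {a, b} \<notin> (\<lambda>(c, d). {c, d}) ` set (path_edges p)"
  using path_edges_subset[of p] by (auto simp: doubleton_eq_iff)

lemma set_tl_subset_odd_edges:
  "set (tl p) \<subseteq> insert (last p) (fst ` set (odd_edges p) \<union> snd ` set (odd_edges p))"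
  by (induction p rule: odd_edges.induct) auto

lemma crosses_distinct: "crosses (a, b) (c, d) \<Longrightarrow> distinct [a, c, b, d]"
  unfolding crosses_def by auto

lemma notin_tl_if_odd_edges_cross:
  assumes "\<forall>e \<in> set (odd_edges p). crosses e (a, b)" and "a \<noteq> last p"
  shows "a \<notin> set (tl p)"
  using assms set_tl_subset_odd_edges[of p] by (fastforce dest: crosses_distinct)

lemma tpath_hd_notin_tl: "p \<in> tpaths S D a b \<Longrightarrow> a \<notin> set (tl p)"
  by (rule notin_tl_if_odd_edges_cross) (auto simp: mem_tpaths_iff)

lemma finite_tpaths:
  assumes "finite S"
  shows "finite (tpaths S D a b)"
proof (rule finite_subset)
  show "tpaths S D a b \<subseteq> {p. set p \<subseteq> S \<and> length p \<le> card (Pow S) + 1}"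
  proof
    fix p assume p: "p \<in> tpaths S D a b"
    let ?steps = "map (\<lambda>(c, d). {c, d}) (path_edges p)"
    have "set ?steps \<subseteq> Pow S"
      using p path_edges_subset[of p] by (auto simp: mem_tpaths_iff)
    then have "card (set ?steps) \<le> card (Pow S)"
      using assms by (simp add: card_mono)
    moreover have "card (set ?steps) = length p - 1"
      using p distinct_card[of ?steps] by (simp add: mem_tpaths_iff)
    ultimately show "p \<in> {p. set p \<subseteq> S \<and> length p \<le> card (Pow S) + 1}"
      using p by (auto simp: mem_tpaths_iff)
  qed
  show "finite {p. set p \<subseteq> S \<and> length p \<le> card (Pow S) + 1}"
    using assms by (rule finite_lists_length_le)
qed

section \<open>The polygon split by the diagonal (t,v)\<close>

text \<open>Unfolded, every statement about the cyclic order below is a Boolean combination of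
  linear (in)equalities between the vertices; over int, smt decides it.\<close>
lemmas cyclic_order_simps =
  of_nat_less_iff[where 'a = int, symmetric] of_nat_eq_iff[where 'a = int, symmetric]
  distinct.simps list.set insert_iff empty_iff prod.case prod.inject fst_conv snd_conv

lemma crosses_sym: "crosses d e \<longleftrightarrow> crosses e d"
  unfolding crosses_def cbtw_def split_beta cyclic_order_simps by (smt (z3))

lemma crosses_swap: "crosses (a, b) e \<longleftrightarrow> crosses (b, a) e"
  unfolding crosses_def cbtw_def split_beta cyclic_order_simps by (smt (z3))

locale diagonal_split =
  fixes n t v i k :: nat and D2 :: "(nat \<times> nat) set"
  assumes t_less: "t < n" and v_less: "v < n" and i_less: "i < n" and k_less: "k < n"
    and t_i_v: "cbtw t i v" and v_k_t: "cbtw v k t"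
    and dissection_D2: "dissection (side n v t) D2"
begin

abbreviation "P2 \<equiv> side n v t"
abbreviation "E \<equiv> {(t, v), (v, t)}"

lemma mem_P2_iff: "a \<in> P2 \<longleftrightarrow> a = v \<or> a = t \<or> (a < n \<and> cbtw v a t)"
  by (auto simp: side_def)

lemma P2_subset: "P2 \<subseteq> {0..<n}"
  using t_less v_less by (auto simp: side_def)

lemma t_in_P2: "t \<in> P2" and v_in_P2: "v \<in> P2" and k_in_P2: "k \<in> P2"
  using k_less v_k_t by (auto simp: side_def)

lemma i_notin_P2: "i \<notin> P2"
  using t_i_v unfolding mem_P2_iff cbtw_def by auto

lemma distinct_vertices: "t \<noteq> v" "i \<noteq> k" "k \<noteq> t" "k \<noteq> v"
  using t_i_v v_k_t unfolding cbtw_def by auto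

lemma diagonal_ends_in_P2: "(a, b) \<in> E \<union> D2 \<Longrightarrow> a \<in> P2 \<and> b \<in> P2"
  using dissection_D2 t_in_P2 v_in_P2 unfolding dissection_def internal_diag_def by auto

lemma E_disjoint_D2: "E \<inter> D2 = {}"
proof -
  have "\<forall>w\<in>P2. \<not> cbtw t w v"
    unfolding Ball_def mem_P2_iff cbtw_def by auto
  then have "nbrs P2 t v" "nbrs P2 v t"
    unfolding nbrs_def using t_in_P2 v_in_P2 distinct_vertices by auto
  then show ?thesis
    using dissection_D2 unfolding dissection_def internal_diag_def by auto
qed

lemma crosses_ik_tv: "crosses (i, k) (t, v)"
  using t_i_v v_k_t unfolding crosses_def cbtw_def by (simp only: cyclic_order_simps) (smt (z3))

lemma not_crosses_E: "a \<in> P2 \<Longrightarrow> b \<in> P2 \<Longrightarrow> (c, e) \<in> E \<Longrightarrow> \<not> crosses (a, b) (c, e)"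
  unfolding mem_P2_iff crosses_def cbtw_def by (simp only: cyclic_order_simps) (smt (z3))

lemma crosses_from_i: "w \<in> P2 \<Longrightarrow> w \<notin> {t, v} \<Longrightarrow> crosses (i, w) (t, v)"
  using t_i_v unfolding mem_P2_iff crosses_def cbtw_def by (simp only: cyclic_order_simps) (smt (z3))

lemma tl_tpath_in_P2:
  assumes "p \<in> tpaths {0..<n} (E \<union> D2) i k"
  shows "set (tl p) \<subseteq> P2"
proof -
  have "\<forall>e \<in> set (odd_edges p). e \<in> E \<union> D2" and last: "last p = k"
    using assms by (auto simp: mem_tpaths_iff)
  then have "\<forall>(a, b) \<in> set (odd_edges p). a \<in> P2 \<and> b \<in> P2"
    using diagonal_ends_in_P2 by blast
  then show ?thesis
    using set_tl_subset_odd_edges[of p] k_in_P2 last by fastforce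
qed

lemma tpath_from_i_shape:
  assumes p: "p \<in> tpaths {0..<n} (E \<union> D2) i k"
  obtains x z r where "p = i # x # z # r" and "x \<in> {t, v}"
proof -
  have "2 \<le> length p" "hd p = i"
    using p by (auto simp: mem_tpaths_iff)
  then obtain x r where p_eq: "p = i # x # r"
    by (cases p; cases "tl p") auto
  have no_cross: "\<not> crosses (i, x) (t, v)"
    using p by (auto simp: mem_tpaths_iff p_eq)
  have "r \<noteq> []"
    using p no_cross crosses_ik_tv by (auto simp: mem_tpaths_iff p_eq)
  moreover have "x \<in> {t, v}"
    using tl_tpath_in_P2[OF p] no_cross crosses_from_i by (auto simp: p_eq)
  ultimately show ?thesis
    using that p_eq by (auto simp: neq_Nil_conv)
qed

lemma path_edges_not_crossing_E:
  assumes "set l \<subseteq> P2" and "\<forall>(a, b) \<in> set (path_edges l). a \<noteq> b \<and> (\<forall>d\<in>D2. \<not> crosses (a, b) d)"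
  shows "\<forall>(a, b) \<in> set (path_edges l). a \<noteq> b \<and> (\<forall>d\<in>E \<union> D2. \<not> crosses (a, b) d)"
proof -
  have "\<not> crosses (a, b) (c, e)" if "(a, b) \<in> set (path_edges l)" "(c, e) \<in> E" for a b c e
  proof -
    have "a \<in> P2" "b \<in> P2"
      using that(1) assms(1) path_edges_subset[of l] by auto
    then show ?thesis
      using that(2) by (rule not_crosses_E)
  qed
  then show ?thesis
    using assms(2) by fast
qed

end

locale diagonal_split_via = diagonal_split +
  fixes x y :: nat
  assumes xy: "(x, y) \<in> {(t, v), (v, t)}"
begin

lemma x_in_P2: "x \<in> P2" and y_in_P2: "y \<in> P2" and xy_in_E: "(x, y) \<in> E"
  and x_neq_y: "x \<noteq> y" and x_neq_k: "x \<noteq> k" and y_neq_k: "y \<noteq> k"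
  using xy t_in_P2 v_in_P2 distinct_vertices by auto

lemma crosses_xy_ik: "crosses (x, y) (i, k)"
  using t_i_v v_k_t xy unfolding crosses_def cbtw_def by (simp only: cyclic_order_simps) (smt (z3))

lemma not_crosses_ix: "a \<in> P2 \<Longrightarrow> b \<in> P2 \<Longrightarrow> \<not> crosses (i, x) (a, b)"
  using t_i_v xy unfolding mem_P2_iff crosses_def cbtw_def by (simp only: cyclic_order_simps) (smt (z3))

lemma crosses_yk_iff:
  "a \<in> P2 \<Longrightarrow> b \<in> P2 \<Longrightarrow> a \<noteq> y \<Longrightarrow> b \<noteq> y \<Longrightarrow> crosses (a, b) (y, k) \<longleftrightarrow> crosses (a, b) (i, k)"
  using t_i_v v_k_t xy unfolding mem_P2_iff crosses_def cbtw_def by (simp only: cyclic_order_simps) (smt (z3))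

lemma closer_xy:
  "a \<in> P2 \<Longrightarrow> b \<in> P2 \<Longrightarrow> crosses (a, b) (i, k) \<Longrightarrow> (a, b) \<notin> E \<Longrightarrow> closer i k (x, y) (a, b)"
  using t_i_v v_k_t xy unfolding mem_P2_iff crosses_def closer_def up_end_def low_end_def Let_def cbtw_def
  by (simp only: cyclic_order_simps) (smt (z3))

lemma cbtw_yk_iff: "a \<in> P2 \<Longrightarrow> a \<noteq> y \<Longrightarrow> a \<noteq> k \<Longrightarrow> cbtw y a k \<longleftrightarrow> cbtw i a k"
  using t_i_v v_k_t xy unfolding mem_P2_iff cbtw_def by (simp only: cyclic_order_simps) (smt (z3))

lemma closer_avoids_y:
  assumes "a1 \<in> P2" "b1 \<in> P2" "a2 \<in> P2" "b2 \<in> P2"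
    and "crosses (a1, b1) (i, k)" "crosses (a2, b2) (i, k)" "closer i k (a1, b1) (a2, b2)"
    and "a1 \<noteq> y" "b1 \<noteq> y"
  shows "a2 \<noteq> y \<and> b2 \<noteq> y"
  using assms t_i_v v_k_t xy
  unfolding mem_P2_iff crosses_def closer_def up_end_def low_end_def Let_def cbtw_def
  by (simp only: cyclic_order_simps) (smt (z3))

lemma closer_yk_iff:
  assumes "a1 \<in> P2 - {y, k}" "b1 \<in> P2 - {y, k}" "a2 \<in> P2 - {y, k}" "b2 \<in> P2 - {y, k}"
  shows "closer y k (a1, b1) (a2, b2) \<longleftrightarrow> closer i k (a1, b1) (a2, b2)"
  using assms unfolding closer_def up_end_def low_end_def Let_def fst_conv snd_conv
  by (simp add: cbtw_yk_iff)

lemma odd_edges_yk_iff_ik: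
  assumes ends: "\<forall>(a, b) \<in> set es. a \<in> P2 \<and> b \<in> P2 \<and> a \<noteq> y \<and> b \<noteq> y"
  shows "(\<forall>e \<in> set es. e \<in> D2 \<and> crosses e (y, k)) \<and> sorted_wrt (closer y k) es \<longleftrightarrow>
    (\<forall>e \<in> set es. e \<in> E \<union> D2 \<and> crosses e (i, k)) \<and> sorted_wrt (closer i k) es"
proof -
  have in_D2: "e \<in> D2 \<longleftrightarrow> e \<in> E \<union> D2" if "e \<in> set es" for e
    using that ends xy by auto
  have crosses_iff: "crosses e (y, k) \<longleftrightarrow> crosses e (i, k)" if "e \<in> set es" for e
    using that ends crosses_yk_iff by fastforce
  have closer_iff: "closer y k e1 e2 \<longleftrightarrow> closer i k e1 e2"
    if "e1 \<in> set es" "e2 \<in> set es" "crosses e1 (i, k)" "crosses e2 (i, k)" for e1 e2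
  proof -
    obtain a1 b1 a2 b2 where "e1 = (a1, b1)" "e2 = (a2, b2)"
      by fastforce
    then show ?thesis
      using that ends closer_yk_iff[of a1 b1 a2 b2] crosses_distinct[of a1 b1 i k]
        crosses_distinct[of a2 b2 i k] by fastforce
  qed
  show ?thesis
  proof
    assume from_y: "(\<forall>e \<in> set es. e \<in> D2 \<and> crosses e (y, k)) \<and> sorted_wrt (closer y k) es"
    then have "\<forall>e \<in> set es. crosses e (i, k)"
      using crosses_iff by blast
    then have "sorted_wrt (closer i k) es"
      using from_y closer_iff sorted_wrt_mono_rel[of es "closer y k" "closer i k"] by blast
    then show "(\<forall>e \<in> set es. e \<in> E \<union> D2 \<and> crosses e (i, k)) \<and> sorted_wrt (closer i k) es"
      using from_y in_D2 crosses_iff by blast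
  next
    assume from_i: "(\<forall>e \<in> set es. e \<in> E \<union> D2 \<and> crosses e (i, k)) \<and> sorted_wrt (closer i k) es"
    then have "sorted_wrt (closer y k) es"
      using closer_iff sorted_wrt_mono_rel[of es "closer i k" "closer y k"] by blast
    then show "(\<forall>e \<in> set es. e \<in> D2 \<and> crosses e (y, k)) \<and> sorted_wrt (closer y k) es"
      using from_i in_D2 crosses_iff by blast
  qed
qed

lemma odd_edges_ik_imp_yk:
  assumes "\<forall>e \<in> set ((a, b) # es). e \<in> E \<union> D2 \<and> crosses e (i, k)"
    and "sorted_wrt (closer i k) ((a, b) # es)" and "a \<noteq> y" "b \<noteq> y"
  shows "(\<forall>e \<in> set ((a, b) # es). e \<in> D2 \<and> crosses e (y, k)) \<and> sorted_wrt (closer y k) ((a, b) # es)"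
proof -
  have ends: "c \<in> P2 \<and> d \<in> P2" if "(c, d) \<in> set ((a, b) # es)" for c d
    using that assms(1) diagonal_ends_in_P2 by blast
  have "c \<noteq> y \<and> d \<noteq> y" if "(c, d) \<in> set ((a, b) # es)" for c d
  proof (cases "(c, d) = (a, b)")
    case False
    then have "closer i k (a, b) (c, d)"
      using that assms(2) by auto
    moreover have "crosses (a, b) (i, k)" "crosses (c, d) (i, k)"
      using that assms(1) by auto
    moreover have "a \<in> P2" "b \<in> P2" "c \<in> P2" "d \<in> P2"
      using that ends by auto
    ultimately show ?thesis
      using closer_avoids_y assms(3,4) by blast
  qed (use assms in simp)
  then show ?thesis
    using ends assms(1,2) odd_edges_yk_iff_ik[of "(a, b) # es"] by blast
qed

lemma ix_not_crossing: "d \<in> E \<union> D2 \<Longrightarrow> \<not> crosses (i, x) d"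
proof (cases d)
  case (Pair a b)
  then show "d \<in> E \<union> D2 \<Longrightarrow> \<not> crosses (i, x) d"
    using diagonal_ends_in_P2[of a b] not_crosses_ix[of a b] by simp
qed

lemma tpath_from_y_odd_edges:
  assumes "q \<in> tpaths P2 D2 y k"
  shows "(\<forall>e \<in> set (odd_edges q). e \<in> E \<union> D2 \<and> crosses e (i, k)) \<and> sorted_wrt (closer i k) (odd_edges q)"
proof -
  have from_y: "(\<forall>e \<in> set (odd_edges q). e \<in> D2 \<and> crosses e (y, k)) \<and> sorted_wrt (closer y k) (odd_edges q)"
    using assms by (simp add: mem_tpaths_iff)
  have "a \<in> P2 \<and> b \<in> P2 \<and> a \<noteq> y \<and> b \<noteq> y" if "(a, b) \<in> set (odd_edges q)" for a b
  proof -
    have "(a, b) \<in> D2" "crosses (a, b) (y, k)"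
      using from_y that by auto
    then show ?thesis
      using diagonal_ends_in_P2[of a b] crosses_distinct[of a b y k] by auto
  qed
  then show ?thesis
    using from_y odd_edges_yk_iff_ik[of "odd_edges q"] by blast
qed

section \<open>T-paths from i through an endpoint x of (t,v)\<close>

lemma tpath_replace_head:
  assumes q: "y # x # r \<in> tpaths P2 D2 y k"
  shows "i # x # r \<in> tpaths {0..<n} (E \<union> D2) i k"
proof -
  have set_r: "set (x # r) \<subseteq> P2" and last: "last (x # r) = k"
    and edges: "\<forall>(a, b) \<in> set (path_edges (x # r)). a \<noteq> b \<and> (\<forall>d\<in>D2. \<not> crosses (a, b) d)"
    and distinct: "distinct (map (\<lambda>(a, b). {a, b}) (path_edges (x # r)))"
    using q by (simp_all add: mem_tpaths_iff)
  have i_notin: "i \<notin> set (x # r)"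
    using set_r i_notin_P2 by blast
  have i_x: "i \<noteq> x"
    using i_notin by simp
  show ?thesis
  proof (rule mem_tpathsI)
    show "set (i # x # r) \<subseteq> {0..<n}"
      using set_r P2_subset i_less by auto
    show "\<forall>(a, b) \<in> set (path_edges (i # x # r)). a \<noteq> b \<and> (\<forall>d\<in>E \<union> D2. \<not> crosses (a, b) d)"
      using path_edges_not_crossing_E[OF set_r edges] ix_not_crossing i_x by simp
    show "distinct (map (\<lambda>(a, b). {a, b}) (path_edges (i # x # r)))"
      using distinct doubleton_notin_path_edges[OF i_notin] by simp
    show "\<forall>e \<in> set (odd_edges (i # x # r)). e \<in> E \<union> D2 \<and> crosses e (i, k)"
      and "sorted_wrt (closer i k) (odd_edges (i # x # r))"
      using tpath_from_y_odd_edges[OF q] odd_edges_Cons_eq[of i "x # r" y] by simp_all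
  qed (use last distinct_vertices in simp_all)
qed

lemma xy_not_crossing: "d \<in> E \<union> D2 \<Longrightarrow> \<not> crosses (x, y) d"
proof (cases d)
  case (Pair a b)
  then show "d \<in> E \<union> D2 \<Longrightarrow> \<not> crosses (x, y) d"
    using diagonal_ends_in_P2[of a b] not_crosses_E[of a b x y] xy_in_E crosses_sym by simp
qed

lemma tpath_from_y_closer_xy:
  assumes q: "q \<in> tpaths P2 D2 y k" and e: "(a, b) \<in> set (odd_edges q)"
  shows "closer i k (x, y) (a, b)"
proof -
  have "(a, b) \<in> D2"
    using q e by (auto simp: mem_tpaths_iff)
  then show ?thesis
    using e tpath_from_y_odd_edges[OF q] closer_xy diagonal_ends_in_P2[of a b] E_disjoint_D2 by blast
qed

lemma tpath_prepend:
  assumes q: "q \<in> tpaths P2 D2 y k" and second: "q ! 1 \<noteq> x"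
  shows "i # x # q \<in> tpaths {0..<n} (E \<union> D2) i k"
proof -
  have set_q: "set q \<subseteq> P2" and last: "last q = k"
    and edges: "\<forall>(a, b) \<in> set (path_edges q). a \<noteq> b \<and> (\<forall>d\<in>D2. \<not> crosses (a, b) d)"
    and distinct: "distinct (map (\<lambda>(a, b). {a, b}) (path_edges q))"
    and "2 \<le> length q" "hd q = y"
    using q by (simp_all add: mem_tpaths_iff)
  then obtain w r where q_eq: "q = y # w # r"
    by (cases q; cases "tl q") auto
  have i_notin: "i \<notin> set (x # q)"
    using set_q x_in_P2 i_notin_P2 by auto
  have i_x: "i \<noteq> x"
    using i_notin by simp
  have "y \<notin> set (w # r)"
    using tpath_hd_notin_tl[OF q] by (simp add: q_eq)
  then have xy_new: "{x, y} \<notin> (\<lambda>(a, b). {a, b}) ` set (path_edges q)"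
    using second doubleton_notin_path_edges[of y "w # r" x] by (auto simp: q_eq insert_commute)
  have odd_q: "\<forall>e \<in> set (odd_edges q). e \<in> E \<union> D2 \<and> crosses e (i, k)"
    and sorted_q: "sorted_wrt (closer i k) (odd_edges q)"
    using tpath_from_y_odd_edges[OF q] by simp_all
  have odd_p: "odd_edges (i # x # q) = (x, y) # odd_edges q"
    by (simp add: q_eq)
  show ?thesis
  proof (rule mem_tpathsI)
    show "set (i # x # q) \<subseteq> {0..<n}"
      using set_q x_in_P2 P2_subset i_less by auto
    have "path_edges (i # x # q) = (i, x) # (x, y) # path_edges q"
      by (simp add: q_eq)
    then show "\<forall>(a, b) \<in> set (path_edges (i # x # q)). a \<noteq> b \<and> (\<forall>d\<in>E \<union> D2. \<not> crosses (a, b) d)"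
      using path_edges_not_crossing_E[OF set_q edges] ix_not_crossing xy_not_crossing i_x x_neq_y
      by simp
    show "distinct (map (\<lambda>(a, b). {a, b}) (path_edges (i # x # q)))"
      using distinct doubleton_notin_path_edges[OF i_notin] xy_new by (simp add: q_eq)
    show "\<forall>e \<in> set (odd_edges (i # x # q)). e \<in> E \<union> D2 \<and> crosses e (i, k)"
      using odd_q xy_in_E crosses_xy_ik odd_p by auto
    show "sorted_wrt (closer i k) (odd_edges (i # x # q))"
      using sorted_q tpath_from_y_closer_xy[OF q] odd_p by auto
  qed (use last distinct_vertices q_eq in simp_all)
qed

lemma tpath_drop_two:
  assumes p: "i # x # y # r \<in> tpaths {0..<n} (E \<union> D2) i k"
  shows "y # r \<in> tpaths P2 D2 y k"
proof -
  have last: "last (y # r) = k"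
    and edges: "\<forall>(a, b) \<in> set (path_edges (i # x # y # r)). a \<noteq> b \<and> (\<forall>d\<in>E \<union> D2. \<not> crosses (a, b) d)"
    and distinct: "distinct (map (\<lambda>(a, b). {a, b}) (path_edges (i # x # y # r)))"
    and odd_p: "\<forall>e \<in> set (odd_edges (i # x # y # r)). e \<in> E \<union> D2 \<and> crosses e (i, k)"
    and sorted_p: "sorted_wrt (closer i k) (odd_edges (i # x # y # r))"
    using p by (simp_all add: mem_tpaths_iff)
  obtain w r' where r_eq: "r = w # r'"
    using last y_neq_k by (cases r) auto
  have odd_yr: "(\<forall>e \<in> set (odd_edges (y # r)). e \<in> D2 \<and> crosses e (y, k)) \<and>
      sorted_wrt (closer y k) (odd_edges (y # r))"
  proof (cases r')
    case Nil
    then show ?thesis by (simp add: r_eq)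
  next
    case (Cons u r'')
    have "w \<noteq> y"
      using edges by (simp add: r_eq)
    have "{y, w} \<noteq> {w, u}"
      using distinct by (simp add: r_eq Cons)
    then have "u \<noteq> y"
      by (metis insert_commute)
    have "\<forall>e \<in> set ((w, u) # odd_edges (u # r'')). e \<in> E \<union> D2 \<and> crosses e (i, k)"
      and "sorted_wrt (closer i k) ((w, u) # odd_edges (u # r''))"
      using odd_p sorted_p by (simp_all add: r_eq Cons)
    from odd_edges_ik_imp_yk[OF this \<open>w \<noteq> y\<close> \<open>u \<noteq> y\<close>] show ?thesis
      by (simp add: r_eq Cons)
  qed
  show ?thesis
  proof (rule mem_tpathsI)
    show "set (y # r) \<subseteq> P2"
      using tl_tpath_in_P2[OF p] by simp
    show "\<forall>(a, b) \<in> set (path_edges (y # r)). a \<noteq> b \<and> (\<forall>d\<in>D2. \<not> crosses (a, b) d)"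
      using edges by auto
    show "distinct (map (\<lambda>(a, b). {a, b}) (path_edges (y # r)))"
      using distinct by simp
  qed (use last y_neq_k odd_yr r_eq in simp_all)
qed

lemma tpath_restore_head:
  assumes p: "i # x # z # r \<in> tpaths {0..<n} (E \<union> D2) i k" and z: "z \<noteq> y"
  shows "y # x # z # r \<in> tpaths P2 D2 y k"
proof -
  have last: "last (z # r) = k"
    and edges: "\<forall>(a, b) \<in> set (path_edges (i # x # z # r)). a \<noteq> b \<and> (\<forall>d\<in>E \<union> D2. \<not> crosses (a, b) d)"
    and distinct: "distinct (map (\<lambda>(a, b). {a, b}) (path_edges (i # x # z # r)))"
    and odd_p: "\<forall>e \<in> set (odd_edges (i # x # z # r)). e \<in> E \<union> D2 \<and> crosses e (i, k)"
    and sorted_p: "sorted_wrt (closer i k) (odd_edges (i # x # z # r))"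
    using p by (simp_all add: mem_tpaths_iff)
  have odd_q: "(\<forall>e \<in> set (odd_edges (y # x # z # r)). e \<in> D2 \<and> crosses e (y, k)) \<and>
      sorted_wrt (closer y k) (odd_edges (y # x # z # r))"
  proof -
    have "\<forall>e \<in> set ((x, z) # odd_edges (z # r)). e \<in> E \<union> D2 \<and> crosses e (i, k)"
      and "sorted_wrt (closer i k) ((x, z) # odd_edges (z # r))"
      using odd_p sorted_p by simp_all
    from odd_edges_ik_imp_yk[OF this x_neq_y z] show ?thesis
      by simp
  qed
  have "y \<notin> set (tl (y # x # z # r))"
    by (rule notin_tl_if_odd_edges_cross[where b = k]) (use odd_q last y_neq_k in simp_all)
  then have "y \<notin> set (x # z # r)"
    by simp
  show ?thesis
  proof (rule mem_tpathsI)
    show "set (y # x # z # r) \<subseteq> P2"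
      using tl_tpath_in_P2[OF p] y_in_P2 by simp
    have "\<not> crosses (y, x) d" if "d \<in> D2" for d
      using that xy_not_crossing[of d] crosses_swap[of y x d] by simp
    moreover have "\<forall>(a, b) \<in> set (path_edges (x # z # r)). a \<noteq> b \<and> (\<forall>d\<in>D2. \<not> crosses (a, b) d)"
      using edges by auto
    ultimately show "\<forall>(a, b) \<in> set (path_edges (y # x # z # r)). a \<noteq> b \<and> (\<forall>d\<in>D2. \<not> crosses (a, b) d)"
      using x_neq_y by simp
    show "distinct (map (\<lambda>(a, b). {a, b}) (path_edges (y # x # z # r)))"
      using distinct doubleton_notin_path_edges[OF \<open>y \<notin> set (x # z # r)\<close>] by simp
  qed (use last y_neq_k odd_q in simp_all)
qed

definition extend_tpath :: "nat list \<Rightarrow> nat list" where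
  "extend_tpath q = (if q ! 1 = x then i # tl q else i # x # q)"

lemma extend_tpath_mem:
  assumes "q \<in> tpaths P2 D2 y k"
  shows "extend_tpath q \<in> tpaths {0..<n} (E \<union> D2) i k \<and> extend_tpath q ! 1 = x"
proof (cases "q ! 1 = x")
  case True
  have "2 \<le> length q" "hd q = y"
    using assms by (simp_all add: mem_tpaths_iff)
  then obtain r where "q = y # x # r"
    using True by (cases q; cases "tl q") auto
  then show ?thesis
    using tpath_replace_head assms by (simp add: extend_tpath_def)
next
  case False
  then show ?thesis
    using tpath_prepend assms by (simp add: extend_tpath_def)
qed

lemma extend_tpath_image:
  "extend_tpath ` tpaths P2 D2 y k = {p \<in> tpaths {0..<n} (E \<union> D2) i k. p ! 1 = x}"
proof (intro equalityI subsetI)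
  fix p assume "p \<in> extend_tpath ` tpaths P2 D2 y k"
  then show "p \<in> {p \<in> tpaths {0..<n} (E \<union> D2) i k. p ! 1 = x}"
    using extend_tpath_mem by blast
next
  fix p assume "p \<in> {p \<in> tpaths {0..<n} (E \<union> D2) i k. p ! 1 = x}"
  then have p: "p \<in> tpaths {0..<n} (E \<union> D2) i k" and "p ! 1 = x"
    by simp_all
  then obtain z r where p_eq: "p = i # x # z # r"
    by (elim tpath_from_i_shape) simp
  show "p \<in> extend_tpath ` tpaths P2 D2 y k"
  proof (cases "z = y")
    case True
    have q: "y # r \<in> tpaths P2 D2 y k"
      using tpath_drop_two p by (simp add: p_eq True)
    then obtain w r' where r_eq: "r = w # r'"
      by (cases r) (auto simp: mem_tpaths_iff)
    have "distinct (map (\<lambda>(a, b). {a, b}) (path_edges p))"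
      using p by (simp add: mem_tpaths_iff)
    then have "{x, y} \<noteq> {y, w}"
      by (simp add: p_eq True r_eq)
    then have "w \<noteq> x"
      by (metis insert_commute)
    then have "p = extend_tpath (y # r)"
      by (simp add: extend_tpath_def p_eq True r_eq)
    then show ?thesis
      using q by blast
  next
    case False
    then have "y # x # z # r \<in> tpaths P2 D2 y k"
      using tpath_restore_head p by (simp add: p_eq)
    moreover have "p = extend_tpath (y # x # z # r)"
      by (simp add: extend_tpath_def p_eq)
    ultimately show ?thesis
      by blast
  qed
qed

lemma inj_on_extend_tpath: "inj_on extend_tpath (tpaths P2 D2 y k)"
proof (rule inj_onI)
  fix q1 q2
  assume q1: "q1 \<in> tpaths P2 D2 y k" and q2: "q2 \<in> tpaths P2 D2 y k"
    and eq: "extend_tpath q1 = extend_tpath q2"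
  obtain r1 r2 where q1_eq: "q1 = y # r1" and q2_eq: "q2 = y # r2"
    using q1 q2 by (cases q1; cases q2) (auto simp: mem_tpaths_iff)
  have "y \<notin> set r1" "y \<notin> set r2"
    using tpath_hd_notin_tl[OF q1] tpath_hd_notin_tl[OF q2] by (simp_all add: q1_eq q2_eq)
  then show "q1 = q2"
    using eq by (cases r1; cases r2) (auto simp: extend_tpath_def q1_eq q2_eq split: if_splits)
qed

lemma tcoef_extend_tpath:
  assumes q: "q \<in> tpaths P2 D2 y k" and unit: "is_unit (c y x)"
  shows "tcoef c (extend_tpath q) = c i x * rinv (c y x) * tcoef c q"
proof -
  have "2 \<le> length q" "hd q = y" "last q = k"
    using q by (simp_all add: mem_tpaths_iff)
  then obtain w r where q_eq: "q = y # w # r"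
    by (cases q; cases "tl q") auto
  show ?thesis
  proof (cases "w = x")
    case True
    then obtain z r' where r_eq: "r = z # r'"
      using \<open>last q = k\<close> x_neq_k by (cases r) (auto simp: q_eq)
    have "c i x * rinv (c y x) * tcoef c q = c i x * (rinv (c y x) * c y x) * rinv (c z x) * tcoef c (z # r')"
      by (simp add: q_eq True r_eq mult.assoc)
    also have "\<dots> = tcoef c (extend_tpath q)"
      by (simp add: rinv_left_inverse[OF unit] extend_tpath_def q_eq True r_eq)
    finally show ?thesis ..
  next
    case False
    then show ?thesis
      by (simp add: extend_tpath_def q_eq)
  qed
qed

lemma sum_tpaths_through_x:
  fixes c :: "nat \<Rightarrow> nat \<Rightarrow> 'a :: ring_1"
  assumes "is_unit (c y x)"
  shows "(\<Sum>p \<in> {p \<in> tpaths {0..<n} (E \<union> D2) i k. p ! 1 = x}. tcoef c p)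
    = c i x * rinv (c y x) * (\<Sum>q \<in> tpaths P2 D2 y k. tcoef c q)"
proof -
  have "(\<Sum>p \<in> {p \<in> tpaths {0..<n} (E \<union> D2) i k. p ! 1 = x}. tcoef c p)
      = (\<Sum>q \<in> tpaths P2 D2 y k. tcoef c (extend_tpath q))"
    unfolding extend_tpath_image[symmetric] using inj_on_extend_tpath by (rule sum.reindex_cong) simp_all
  also have "\<dots> = (\<Sum>q \<in> tpaths P2 D2 y k. c i x * rinv (c y x) * tcoef c q)"
    by (rule sum.cong) (simp_all add: tcoef_extend_tpath assms)
  finally show ?thesis
    by (simp add: sum_distrib_left)
qed

end

context diagonal_split
begin

lemma sum_tpaths_from_i:
  fixes c :: "nat \<Rightarrow> nat \<Rightarrow> 'a :: ring_1"
  assumes "is_unit (c t v)" and "is_unit (c v t)"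
  shows "(\<Sum>p \<in> tpaths {0..<n} (E \<union> D2) i k. tcoef c p)
    = c i t * rinv (c v t) * (\<Sum>q \<in> tpaths P2 D2 v k. tcoef c q)
      + c i v * rinv (c t v) * (\<Sum>q \<in> tpaths P2 D2 t k. tcoef c q)"
proof -
  interpret tv: diagonal_split_via n t v i k D2 t v
    by unfold_locales simp
  interpret vt: diagonal_split_via n t v i k D2 v t
    by unfold_locales simp
  let ?T = "tpaths {0..<n} (E \<union> D2) i k"
  have "p ! 1 \<in> {t, v}" if "p \<in> ?T" for p
    using that by (rule tpath_from_i_shape) simp
  then have "?T = {p \<in> ?T. p ! 1 = t} \<union> {p \<in> ?T. p ! 1 = v}"
    by blast
  then have "(\<Sum>p \<in> ?T. tcoef c p) = (\<Sum>p \<in> {p \<in> ?T. p ! 1 = t} \<union> {p \<in> ?T. p ! 1 = v}. tcoef c p)"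
    by (rule arg_cong)
  also have "\<dots> = (\<Sum>p \<in> {p \<in> ?T. p ! 1 = t}. tcoef c p) + (\<Sum>p \<in> {p \<in> ?T. p ! 1 = v}. tcoef c p)"
    by (rule sum.union_disjoint) (use finite_tpaths[of "{0..<n}"] distinct_vertices in auto)
  finally show ?thesis
    using tv.sum_tpaths_through_x[of c] vt.sum_tpaths_through_x[of c] assms by simp
qed

end

theorem lemma2p8:
  fixes n t v :: nat and D2 :: "(nat \<times> nat) set" and c :: "nat \<Rightarrow> nat \<Rightarrow> 'a::ring_1"
  assumes "n \<ge> 3" and "t < n" and "v < n"
    and "dissection {0..<n} {(t,v),(v,t)}"
    and "dissection (side n v t) D2"
    and "\<forall>(r,s)\<in>{(t,v),(v,t)} \<union> D2. is_unit (c r s)"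
    and "\<forall>i\<in>side n v t. \<forall>k\<in>side n v t. i \<noteq> k \<longrightarrow>
           c i k = (\<Sum>p\<in>tpaths (side n v t) D2 i k. tcoef c p)"
    and "weak_frieze n {(t,v),(v,t)} c"
  shows "\<forall>i\<in>side n t v - {t,v}. \<forall>k\<in>side n v t - {t,v}.
           c i k = (\<Sum>p\<in>tpaths {0..<n} ({(t,v),(v,t)} \<union> D2) i k. tcoef c p)"
proof (intro ballI)
  fix i k assume "i \<in> side n t v - {t, v}" and "k \<in> side n v t - {t, v}"
  then have "cbtw t i v" "i < n" "cbtw v k t" "k < n"
    by (auto simp: side_def)
  then interpret diagonal_split n t v i k D2
    using assms(2,3,5) by unfold_locales
  have "c v k = (\<Sum>q \<in> tpaths P2 D2 v k. tcoef c q)" "c t k = (\<Sum>q \<in> tpaths P2 D2 t k. tcoef c q)"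
    by (rule assms(7)[rule_format]; use t_in_P2 v_in_P2 k_in_P2 distinct_vertices in simp)+
  then have "(\<Sum>p \<in> tpaths {0..<n} (E \<union> D2) i k. tcoef c p)
      = c i t * rinv (c v t) * c v k + c i v * rinv (c t v) * c t k"
    using sum_tpaths_from_i[of c] assms(6) by simp
  also have "\<dots> = c i k"
    using weak_frieze_exchange[OF assms(8) \<open>i < n\<close> \<open>k < n\<close> _ _ crosses_ik_tv] by simp
  finally show "c i k = (\<Sum>p \<in> tpaths {0..<n} (E \<union> D2) i k. tcoef c p)" ..
qed

end
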